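(* Let $\tau>0$, $x_t\in\mathbb{R}^n$, let $i_t$ be an index, and let $x_{t+1}=\operatorname{prox}_{\tau g}(x_t-\tau\nabla f_{i_t}(x_t))$. Then for every $z\in\mathbb{R}^n$ and every $\epsilon>0$, \begin{align*} \|x_{t+1}-z\|^2-\|x_t-z\|^2&\le 2\tau[f_{i_t}(z)-f_{i_t}(x_t)]+2\tau\bigl(g(z)-g(x_{t+1})\bigr)+\frac{\tau}{\epsilon}\|\nabla f_{i_t}(x_t)-\nabla f(x_t)\|^2\\ &\quad+2\tau[f(x_t)-f(x_{t+1})]+[\tau\epsilon+\tau L-1]\|x_t-x_{t+1}\|^2. \end{align*}
   Context: Let $D$ be a probability distribution on an index set, and for each index $i$ let $f_i:\mathbb{R}^n\to\mathbb{R}$ be convex and $L$-smooth (differentiable with $L$-Lipschitz gradient, $L>0$); let $f(x)=\mathbb{E}_{i\sim D}[f_i(x)]$ with $\mathbb{E}_{i\sim D}[\nabla f_i(x)]=\nabla f(x)$. Let $g:\mathbb{R}^n\to\mathbb{R}\cup\{+\infty\}$ be proper, convex and lower semicontinuous. $\operatorname{prox}_{\tau g}(y)=\arg\min_u\{\tau g(u)+\tfrac12\|y-u\|^2\}$. *)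

theory Defs
  imports "HOL-Analysis.Analysis" "HOL-Probability.Probability"
begin

definition proper_fun :: "('a \<Rightarrow> ereal) \<Rightarrow> bool" where
  "proper_fun g \<longleftrightarrow> (\<forall>x. g x \<noteq> -\<infinity>) \<and> (\<exists>x. g x \<noteq> \<infinity>)"

definition ext_convex :: "('a::real_vector \<Rightarrow> ereal) \<Rightarrow> bool" where
  "ext_convex g \<longleftrightarrow> (\<forall>x y u. 0 < u \<and> u < 1 \<longrightarrow>
      g (u *\<^sub>R x + (1 - u) *\<^sub>R y) \<le> ereal u * g x + ereal (1 - u) * g y)"

definition lsc :: "('a::topological_space \<Rightarrow> ereal) \<Rightarrow> bool" where
  "lsc g \<longleftrightarrow> (\<forall>x. g x \<le> Liminf (at x) g)"

definition prox :: "real \<Rightarrow> ('a::real_normed_vector \<Rightarrow> ereal) \<Rightarrow> 'a \<Rightarrow> 'a" where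
  "prox \<tau> g y = arg_min (\<lambda>u. ereal \<tau> * g u + ereal ((norm (y - u))\<^sup>2 / 2)) (\<lambda>_. True)"

end

theory Submission
  imports Defs "HOL-Real_Asymp.Real_Asymp"
begin

(* The prox point p = prox_{\<tau>g}(y), y = x_t - \<tau> \<nabla>f_i(x_t), exists because the prox objective
   is lower semicontinuous and coercive: a proper convex lsc g is bounded below by a function of
   linear growth, while |y - u|^2/2 grows quadratically. Comparing p with the points of the segment
   [p, z] gives the variational inequality \<tau> g(p) + <y - p, z - p> \<le> \<tau> g(z). Then
     |p - z|^2 - |x_t - z|^2 = 2 <x_t - p, z - p> - |x_t - p|^2,
     <x_t - p, z - p> = <y - p, z - p> + \<tau> <\<nabla>f_i(x_t), z - x_t> + \<tau> <\<nabla>f(x_t), x_t - p>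
                        + \<tau> <\<nabla>f_i(x_t) - \<nabla>f(x_t), x_t - p>,
   and the last three terms are bounded by the tangent-plane inequality for the convex f_i, the
   descent lemma for f (whose gradient inherits the Lipschitz constant L from the f_i) and Young's
   inequality with weight \<epsilon>. *)

lemma lsc_iff_eventually_greater:
  "lsc g \<longleftrightarrow> (\<forall>x c. c < g x \<longrightarrow> (\<forall>\<^sub>F y in at x. c < g y))"
  unfolding lsc_def le_Liminf_iff by blast

lemma lsc_open_superlevel:
  assumes "lsc g"
  shows "open {x. c < g x}"
proof (subst open_subopen, intro ballI)
  fix x assume "x \<in> {x. c < g x}"
  with assms have "\<forall>\<^sub>F y in nhds x. c < g y"
    by (simp add: eventually_nhds_conv_at lsc_iff_eventually_greater)
  then show "\<exists>T. open T \<and> x \<in> T \<and> T \<subseteq> {x. c < g x}"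
    unfolding eventually_nhds by blast
qed

lemma lsc_attains_min_on_compact:
  assumes "lsc g" "compact K" "K \<noteq> {}"
  shows "\<exists>x\<in>K. \<forall>y\<in>K. g x \<le> g y"
proof (rule ccontr)
  assume "\<not> ?thesis"
  then have "K \<subseteq> (\<Union>y\<in>K. {x. g y < g x})"
    by (auto simp: not_le)
  then obtain C where C: "C \<subseteq> K" "finite C" "K \<subseteq> (\<Union>y\<in>C. {x. g y < g x})"
    using compactE_image[OF \<open>compact K\<close>] lsc_open_superlevel[OF \<open>lsc g\<close>] by metis
  with \<open>K \<noteq> {}\<close> have "C \<noteq> {}" by auto
  then obtain y0 where "y0 \<in> C" "\<not> (\<exists>y\<in>C. g y < g y0)"
    using arg_min_if_finite[OF \<open>finite C\<close>, of g] by blast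
  then show False
    using C by blast
qed

lemma lsc_cmult:
  assumes "lsc g" "0 \<le> c"
  shows "lsc (\<lambda>x. ereal c * g x)"
  unfolding lsc_def
proof
  fix x
  show "ereal c * g x \<le> Liminf (at x) (\<lambda>x. ereal c * g x)"
  proof (cases "at x = bot")
    case False
    then show ?thesis
      using assms by (simp add: Liminf_ereal_mult_left lsc_def ereal_mult_left_mono)
  qed simp
qed

lemma lsc_add_continuous:
  assumes "lsc g" "continuous_on UNIV q"
  shows "lsc (\<lambda>x. g x + ereal (q x))"
  unfolding lsc_iff_eventually_greater
proof (intro allI impI)
  fix x c assume "c < g x + ereal (q x)"
  then have "c - ereal (q x) < g x"
    by (simp add: ereal_minus_less_iff)
  then obtain b where b: "c - ereal (q x) < ereal b" "ereal b < g x"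
    using ereal_dense2 by blast
  then have "c < ereal (b + q x)"
    by (simp add: ereal_minus_less_iff)
  then obtain w where w: "c < ereal w" "ereal w < ereal (b + q x)"
    using ereal_dense2 by blast
  have "\<forall>\<^sub>F y in at x. ereal b < g y"
    using assms(1) b(2) by (simp add: lsc_iff_eventually_greater)
  moreover have "q \<midarrow>x\<rightarrow> q x"
    using assms(2) by (simp add: continuous_on_def)
  then have "\<forall>\<^sub>F y in at x. w - b < q y"
    using w(2) by (intro order_tendstoD(1)) auto
  ultimately show "\<forall>\<^sub>F y in at x. c < g y + ereal (q y)"
  proof eventually_elim
    case (elim y)
    then have "ereal w < ereal b + ereal (q y)"
      by simp
    also have "\<dots> \<le> g y + ereal (q y)"
      using elim(1) by (intro add_right_mono) simp
    finally show ?case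
      using w(1) by simp
  qed
qed

lemma lsc_attains_min_if_coercive:
  fixes F :: "'a::heine_borel \<Rightarrow> ereal"
  assumes "lsc F" and coercive: "\<And>u. R < dist c u \<Longrightarrow> F x0 < F u"
  obtains p where "\<And>u. F p \<le> F u"
proof -
  have "x0 \<in> cball c R"
    using coercive[of x0] by (meson less_irrefl mem_cball not_le)
  then obtain p where p: "p \<in> cball c R" "\<And>u. u \<in> cball c R \<Longrightarrow> F p \<le> F u"
    using lsc_attains_min_on_compact[OF \<open>lsc F\<close> compact_cball, of c R] by blast
  have "F p \<le> F u" for u
  proof (cases "u \<in> cball c R")
    case False
    then have "F x0 < F u"
      by (intro coercive) simp
    then show ?thesis
      using p(2)[OF \<open>x0 \<in> cball c R\<close>] by simp
  qed (rule p(2))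
  then show thesis
    by (rule that)
qed

lemma ext_convex_lower_bound:
  fixes g :: "'a::real_normed_vector \<Rightarrow> ereal"
  assumes "ext_convex g" "g x0 = ereal a"
    and ball: "\<And>w. w \<in> cball x0 1 \<Longrightarrow> ereal m \<le> g w"
  shows "ereal (m - (a - m) * norm (u - x0)) \<le> g u"
proof -
  have "m \<le> a"
    using ball[of x0] assms(2) by simp
  show ?thesis
  proof (cases "norm (u - x0) \<le> 1")
    case True
    then have "ereal m \<le> g u"
      by (intro ball) (simp add: dist_norm norm_minus_commute)
    moreover have "m - (a - m) * norm (u - x0) \<le> m"
      using \<open>m \<le> a\<close> by simp
    ultimately show ?thesis
      using order_trans ereal_less_eq(3) by blast
  next
    case False
    define r where "r = norm (u - x0)"
    have "r > 1"
      using False by (simp add: r_def)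
    define w where "w = (1 / r) *\<^sub>R u + (1 - 1 / r) *\<^sub>R x0"
    have "w - x0 = (1 / r) *\<^sub>R (u - x0)"
      by (simp add: w_def algebra_simps)
    then have "w \<in> cball x0 1"
      using \<open>r > 1\<close> by (simp add: dist_norm norm_minus_commute r_def)
    then have "ereal m \<le> ereal (1 / r) * g u + ereal (1 - 1 / r) * ereal a"
      using ball[of w] assms(1,2) \<open>r > 1\<close> unfolding ext_convex_def w_def
      by (metis order_trans divide_pos_pos divide_less_eq_1_pos zero_less_one order.strict_trans)
    then show ?thesis
    proof (cases "g u")
      case (real b)
      with \<open>ereal m \<le> _\<close> have "m \<le> b / r + (1 - 1 / r) * a"
        by simp
      then have "r * m \<le> b + (r - 1) * a"
        using \<open>r > 1\<close> by (simp add: field_simps)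
      moreover have "(r - 1) * (m - a) \<ge> r * (m - a)"
        using \<open>m \<le> a\<close> by (simp add: algebra_simps)
      ultimately show ?thesis
        using real by (simp add: r_def algebra_simps)
    qed (use \<open>r > 1\<close> in simp_all)
  qed
qed

definition prox_objective :: "real \<Rightarrow> ('a::real_normed_vector \<Rightarrow> ereal) \<Rightarrow> 'a \<Rightarrow> 'a \<Rightarrow> ereal" where
  "prox_objective \<tau> g y u = ereal \<tau> * g u + ereal ((norm (y - u))\<^sup>2 / 2)"

lemma prox_objective_attains_min:
  fixes g :: "'a::euclidean_space \<Rightarrow> ereal"
  assumes "proper_fun g" "ext_convex g" "lsc g" "\<tau> > 0"
  obtains p where "\<And>u. prox_objective \<tau> g y p \<le> prox_objective \<tau> g y u"
proof -
  have g_ninf: "\<And>x. g x \<noteq> -\<infinity>"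
    using assms(1) by (simp add: proper_fun_def)
  obtain x0 a where a: "g x0 = ereal a"
    using assms(1) g_ninf unfolding proper_fun_def by (metis ereal_cases)
  obtain w0 where "w0 \<in> cball x0 1" and w0: "\<And>w. w \<in> cball x0 1 \<Longrightarrow> g w0 \<le> g w"
    using lsc_attains_min_on_compact[OF assms(3) compact_cball, of x0 1] by auto
  then have "g w0 \<le> ereal a"
    using a by (metis centre_in_cball zero_le_one)
  then obtain m where m: "g w0 = ereal m" "m \<le> a"
    using g_ninf[of w0] by (cases "g w0") auto
  have lower: "ereal (m - (a - m) * norm (u - x0)) \<le> g u" for u
    by (rule ext_convex_lower_bound[OF assms(2) a]) (use w0 m in auto)
  define d where "d = norm (y - x0)"
  define V where "V = \<tau> * a + d\<^sup>2 / 2"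
  have "\<forall>\<^sub>F t in at_top. V < \<tau> * (m - (a - m) * (t + d)) + t\<^sup>2 / 2"
    by real_asymp
  then obtain R where R: "\<And>t. t \<ge> R \<Longrightarrow> V < \<tau> * (m - (a - m) * (t + d)) + t\<^sup>2 / 2"
    by (auto simp: eventually_at_top_linorder)
  have "prox_objective \<tau> g y x0 < prox_objective \<tau> g y u" if "R < dist y u" for u
  proof -
    have "norm (u - x0) \<le> dist y u + d"
      using norm_triangle_ineq4[of "u - y" "x0 - y"] by (simp add: d_def dist_norm norm_minus_commute)
    then have "\<tau> * (m - (a - m) * (dist y u + d)) \<le> \<tau> * (m - (a - m) * norm (u - x0))"
      using m(2) assms(4) by (intro mult_left_mono) (auto intro: mult_left_mono)
    then have "ereal V < ereal (\<tau> * (m - (a - m) * norm (u - x0))) + ereal ((norm (y - u))\<^sup>2 / 2)"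
      using R[of "dist y u"] that by (simp add: dist_norm)
    also have "\<dots> \<le> prox_objective \<tau> g y u"
      unfolding prox_objective_def using lower[of u] assms(4)
      by (intro add_right_mono) (metis ereal_mult_left_mono ereal_less_eq(5) less_imp_le times_ereal.simps(1))
    finally show ?thesis
      using a by (simp add: prox_objective_def V_def d_def)
  qed
  moreover have "lsc (prox_objective \<tau> g y)"
    unfolding prox_objective_def [abs_def] using assms(3,4)
    by (intro lsc_add_continuous lsc_cmult continuous_intros) auto
  ultimately show thesis
    using lsc_attains_min_if_coercive that by blast
qed

lemma prox_minimizes:
  fixes g :: "'a::euclidean_space \<Rightarrow> ereal"
  assumes "proper_fun g" "ext_convex g" "lsc g" "\<tau> > 0"
  shows "prox_objective \<tau> g y (prox \<tau> g y) \<le> prox_objective \<tau> g y u"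
proof -
  obtain p where p: "\<And>u. prox_objective \<tau> g y p \<le> prox_objective \<tau> g y u"
    using prox_objective_attains_min[OF assms, where y = y] by blast
  have "is_arg_min (prox_objective \<tau> g y) (\<lambda>_. True) (arg_min (prox_objective \<tau> g y) (\<lambda>_. True))"
    unfolding arg_min_def by (rule someI[of _ p]) (simp add: is_arg_min_linorder p)
  moreover have "prox \<tau> g y = arg_min (prox_objective \<tau> g y) (\<lambda>_. True)"
    by (simp add: prox_def prox_objective_def [abs_def])
  ultimately show ?thesis
    by (simp add: is_arg_min_linorder)
qed

lemma prox_value_finite:
  fixes g :: "'a::euclidean_space \<Rightarrow> ereal"
  assumes "proper_fun g" "ext_convex g" "lsc g" "\<tau> > 0"
  obtains gp where "g (prox \<tau> g y) = ereal gp"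
proof -
  obtain x0 where "g x0 \<noteq> \<infinity>"
    using assms(1) by (auto simp: proper_fun_def)
  then have "prox_objective \<tau> g y x0 \<noteq> \<infinity>"
    using assms(1,4) by (cases "g x0") (auto simp: prox_objective_def proper_fun_def)
  then have "prox_objective \<tau> g y (prox \<tau> g y) \<noteq> \<infinity>"
    using prox_minimizes[OF assms, of y x0] by auto
  then show thesis
    using that assms(1,4) by (cases "g (prox \<tau> g y)") (auto simp: prox_objective_def proper_fun_def)
qed

lemma prox_objective_min_variational_inequality:
  fixes g :: "'a::real_inner \<Rightarrow> ereal"
  assumes "ext_convex g" "\<And>x. g x \<noteq> -\<infinity>" "\<tau> > 0"
    and min: "\<And>u. prox_objective \<tau> g y p \<le> prox_objective \<tau> g y u"
    and gp: "g p = ereal gp" and gz: "g z = ereal gz"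
  shows "\<tau> * gp + (y - p) \<bullet> (z - p) \<le> \<tau> * gz"
proof -
  have segment: "\<tau> * gp + (y - p) \<bullet> (z - p) \<le> \<tau> * gz + s * ((norm (z - p))\<^sup>2 / 2)"
    if s: "0 < s" "s < 1" for s
  proof -
    define u where "u = s *\<^sub>R z + (1 - s) *\<^sub>R p"
    have "g u \<le> ereal s * g z + ereal (1 - s) * g p"
      using assms(1) s unfolding ext_convex_def u_def by blast
    then obtain gu where gu: "g u = ereal gu" "gu \<le> s * gz + (1 - s) * gp"
      using assms(2)[of u] gp gz by (cases "g u") auto
    have yu: "y - u = (y - p) - s *\<^sub>R (z - p)"
      by (simp add: u_def algebra_simps)
    have "\<tau> * gp + (norm (y - p))\<^sup>2 / 2 \<le> \<tau> * gu + (norm (y - u))\<^sup>2 / 2"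
      using min[of u] gp gu by (simp add: prox_objective_def)
    moreover have "(norm (y - u))\<^sup>2 = (norm (y - p))\<^sup>2 - 2 * s * ((y - p) \<bullet> (z - p)) + s\<^sup>2 * (norm (z - p))\<^sup>2"
      unfolding yu power2_norm_eq_inner
      by (simp add: inner_commute algebra_simps power2_eq_square)
    moreover have "\<tau> * gu \<le> \<tau> * (s * gz + (1 - s) * gp)"
      using gu(2) assms(3) by simp
    ultimately have "s * (\<tau> * gp + (y - p) \<bullet> (z - p)) \<le> s * (\<tau> * gz + s * ((norm (z - p))\<^sup>2 / 2))"
      by (simp add: algebra_simps power2_eq_square)
    then show ?thesis
      using s by simp
  qed
  have "((\<lambda>s. \<tau> * gz + s * ((norm (z - p))\<^sup>2 / 2)) \<longlongrightarrow> \<tau> * gz) (at_right 0)"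
    by (auto intro!: tendsto_eq_intros)
  moreover have "\<forall>\<^sub>F s in at_right 0. \<tau> * gp + (y - p) \<bullet> (z - p) \<le> \<tau> * gz + s * ((norm (z - p))\<^sup>2 / 2)"
    using eventually_at_right_real[OF zero_less_one] by eventually_elim (rule segment; simp)
  ultimately show ?thesis
    by (rule tendsto_lowerbound) simp
qed

lemma convex_on_imp_above_tangent_inner:
  fixes f :: "'a::real_inner \<Rightarrow> real"
  assumes "convex_on UNIV f" "(f has_derivative (\<lambda>h. G \<bullet> h)) (at x)"
  shows "f x + G \<bullet> (z - x) \<le> f z"
proof -
  define h where "h t = f (x + t *\<^sub>R (z - x))" for t :: real
  have convex: "convex_on UNIV h"
  proof (rule convex_onI)
    fix t a b :: real assume "0 < t" "t < 1"
    have "x + ((1 - t) *\<^sub>R a + t *\<^sub>R b) *\<^sub>R (z - x) = (1 - t) *\<^sub>R (x + a *\<^sub>R (z - x)) + t *\<^sub>R (x + b *\<^sub>R (z - x))"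
      by (simp add: algebra_simps)
    then show "h ((1 - t) *\<^sub>R a + t *\<^sub>R b) \<le> (1 - t) * h a + t * h b"
      unfolding h_def using convex_onD[OF assms(1), of t] \<open>0 < t\<close> \<open>t < 1\<close> by simp
  qed simp
  have "((\<lambda>t. x + t *\<^sub>R (z - x)) has_derivative (\<lambda>t. t *\<^sub>R (z - x))) (at 0)"
    by (auto intro!: derivative_eq_intros)
  then have "(h has_derivative (\<lambda>t. G \<bullet> (t *\<^sub>R (z - x)))) (at 0)"
    unfolding h_def using has_derivative_compose assms(2) by fastforce
  moreover have "(\<lambda>t. G \<bullet> (t *\<^sub>R (z - x))) = (*) (G \<bullet> (z - x))"
    by (simp add: fun_eq_iff)
  ultimately have "(h has_field_derivative G \<bullet> (z - x)) (at 0)"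
    by (simp add: has_field_derivative_def)
  then have "G \<bullet> (z - x) * (1 - 0) \<le> h 1 - h 0"
    by (intro convex_on_imp_above_tangent[OF convex]) auto
  then show ?thesis
    by (simp add: h_def)
qed

lemma lipschitz_gradient_quadratic_upper_bound:
  fixes f :: "'a::real_inner \<Rightarrow> real"
  assumes deriv: "\<And>x. (f has_derivative (\<lambda>h. G x \<bullet> h)) (at x)"
    and lipschitz: "\<And>x y. norm (G x - G y) \<le> L * norm (x - y)"
  shows "f p \<le> f x + G x \<bullet> (p - x) + L / 2 * (norm (p - x))\<^sup>2"
proof -
  define e where "e = p - x"
  define \<phi> where "\<phi> t = f (x + t *\<^sub>R e) - t * (G x \<bullet> e) - L / 2 * t\<^sup>2 * (norm e)\<^sup>2" for t :: real
  have "\<phi> 1 \<le> \<phi> 0"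
  proof (rule DERIV_nonpos_imp_nonincreasing[of 0 1])
    fix t :: real assume t: "0 \<le> t" "t \<le> 1"
    have "((\<lambda>t. x + t *\<^sub>R e) has_derivative (\<lambda>t. t *\<^sub>R e)) (at t)"
      by (auto intro!: derivative_eq_intros)
    then have "((\<lambda>t. f (x + t *\<^sub>R e)) has_derivative (\<lambda>s. G (x + t *\<^sub>R e) \<bullet> (s *\<^sub>R e))) (at t)"
      using has_derivative_compose deriv by fastforce
    moreover have "(\<lambda>s. G (x + t *\<^sub>R e) \<bullet> (s *\<^sub>R e)) = (*) (G (x + t *\<^sub>R e) \<bullet> e)"
      by (simp add: fun_eq_iff)
    ultimately have "((\<lambda>t. f (x + t *\<^sub>R e)) has_field_derivative G (x + t *\<^sub>R e) \<bullet> e) (at t)"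
      by (simp add: has_field_derivative_def)
    then have "(\<phi> has_field_derivative (G (x + t *\<^sub>R e) - G x) \<bullet> e - L * t * (norm e)\<^sup>2) (at t)"
      unfolding \<phi>_def by (auto intro!: derivative_eq_intros simp: inner_diff_left)
    moreover have "(G (x + t *\<^sub>R e) - G x) \<bullet> e \<le> L * t * (norm e)\<^sup>2"
    proof -
      have "(G (x + t *\<^sub>R e) - G x) \<bullet> e \<le> norm (G (x + t *\<^sub>R e) - G x) * norm e"
        by (rule norm_cauchy_schwarz)
      also have "\<dots> \<le> L * norm (t *\<^sub>R e) * norm e"
        using lipschitz[of "x + t *\<^sub>R e" x] by (simp add: mult_right_mono)
      also have "\<dots> = L * t * (norm e)\<^sup>2"
        using t by (simp add: power2_eq_square)
      finally show ?thesis .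
    qed
    ultimately show "\<exists>y. (\<phi> has_real_derivative y) (at t) \<and> y \<le> 0"
      by auto
  qed simp
  then show ?thesis
    by (simp add: \<phi>_def e_def)
qed

lemma (in prob_space) expectation_lipschitz:
  fixes G :: "'a \<Rightarrow> 'v::real_normed_vector \<Rightarrow> 'b::{banach, second_countable_topology}"
  assumes "\<And>i. norm (G i x - G i y) \<le> L * norm (x - y)"
    and "integrable M (\<lambda>i. G i x)" "integrable M (\<lambda>i. G i y)"
  shows "norm (expectation (\<lambda>i. G i x) - expectation (\<lambda>i. G i y)) \<le> L * norm (x - y)"
proof -
  have "norm (expectation (\<lambda>i. G i x) - expectation (\<lambda>i. G i y)) = norm (expectation (\<lambda>i. G i x - G i y))"
    using assms(2,3) by simp
  also have "\<dots> \<le> expectation (\<lambda>i. norm (G i x - G i y))"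
    by (rule integral_norm_bound)
  also have "\<dots> \<le> expectation (\<lambda>i. L * norm (x - y))"
    using assms by (intro integral_mono) auto
  also have "\<dots> = L * norm (x - y)"
    by (simp add: prob_space)
  finally show ?thesis .
qed

lemma inner_le_Young:
  fixes u v :: "'a::real_inner"
  assumes "\<epsilon> > 0"
  shows "u \<bullet> v \<le> (norm u)\<^sup>2 / (2 * \<epsilon>) + \<epsilon> * (norm v)\<^sup>2 / 2"
proof -
  have "0 \<le> (norm (u - \<epsilon> *\<^sub>R v))\<^sup>2"
    by simp
  also have "\<dots> = (norm u)\<^sup>2 - 2 * \<epsilon> * (u \<bullet> v) + \<epsilon>\<^sup>2 * (norm v)\<^sup>2"
    unfolding power2_norm_eq_inner
    by (simp add: inner_commute algebra_simps power2_eq_square)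
  finally show ?thesis
    using assms by (simp add: field_simps power2_eq_square)
qed

lemma proximal_gradient_step_inequality:
  fixes x z p G H :: "'a::real_inner"
  assumes prox: "\<tau> * gp + (x - \<tau> *\<^sub>R G - p) \<bullet> (z - p) \<le> \<tau> * gz"
    and above_tangent: "\<phi>x + G \<bullet> (z - x) \<le> \<phi>z"
    and quadratic_bound: "Fp \<le> Fx + H \<bullet> (p - x) + L / 2 * (norm (p - x))\<^sup>2"
    and "\<tau> > 0" "\<epsilon> > 0"
  shows "(norm (p - z))\<^sup>2 - (norm (x - z))\<^sup>2
    \<le> 2 * \<tau> * (\<phi>z - \<phi>x) + 2 * \<tau> * (gz - gp) + \<tau> / \<epsilon> * (norm (G - H))\<^sup>2
       + 2 * \<tau> * (Fx - Fp) + (\<tau> * \<epsilon> + \<tau> * L - 1) * (norm (x - p))\<^sup>2"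
proof -
  define N where "N = (norm (x - p))\<^sup>2"
  have "(norm (p - z))\<^sup>2 - (norm (x - z))\<^sup>2 = 2 * ((x - p) \<bullet> (z - p)) - N"
    unfolding N_def power2_norm_eq_inner by (simp add: inner_commute algebra_simps)
  moreover have "(x - p) \<bullet> (z - p) = (x - \<tau> *\<^sub>R G - p) \<bullet> (z - p)
      + \<tau> * (G \<bullet> (z - x)) + \<tau> * (H \<bullet> (x - p)) + \<tau> * ((G - H) \<bullet> (x - p))"
    by (simp add: algebra_simps)
  moreover have "\<tau> * (G \<bullet> (z - x)) \<le> \<tau> * (\<phi>z - \<phi>x)"
    using above_tangent \<open>\<tau> > 0\<close> by simp
  moreover have "\<tau> * (H \<bullet> (x - p)) \<le> \<tau> * (Fx - Fp + L / 2 * N)"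
    using quadratic_bound \<open>\<tau> > 0\<close> unfolding N_def
    by (intro mult_left_mono) (auto simp: inner_diff_right norm_minus_commute)
  moreover have "\<tau> * ((G - H) \<bullet> (x - p)) \<le> \<tau> * ((norm (G - H))\<^sup>2 / (2 * \<epsilon>) + \<epsilon> * N / 2)"
    using inner_le_Young[OF \<open>\<epsilon> > 0\<close>] \<open>\<tau> > 0\<close> unfolding N_def by simp
  ultimately show ?thesis
    using prox unfolding N_def[symmetric] by (simp add: field_simps)
qed

theorem lemmaA5:
  fixes D :: "'i pmf"
    and fi :: "'i \<Rightarrow> 'a::euclidean_space \<Rightarrow> real"
    and gradi :: "'i \<Rightarrow> 'a \<Rightarrow> 'a"
    and f :: "'a \<Rightarrow> real"
    and gradf :: "'a \<Rightarrow> 'a"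
    and g :: "'a \<Rightarrow> ereal"
    and L \<tau> \<epsilon> :: real
    and xt z :: 'a
    and it :: 'i
  assumes L_pos: "L > 0"
    and fi_convex: "\<And>i. convex_on UNIV (fi i)"
    and fi_grad: "\<And>i x. (fi i has_derivative (\<lambda>h. gradi i x \<bullet> h)) (at x)"
    and fi_smooth: "\<And>i x y. norm (gradi i x - gradi i y) \<le> L * norm (x - y)"
    and fi_integrable: "\<And>x. integrable (measure_pmf D) (\<lambda>i. fi i x)"
    and f_def: "\<And>x. f x = measure_pmf.expectation D (\<lambda>i. fi i x)"
    and f_grad: "\<And>x. (f has_derivative (\<lambda>h. gradf x \<bullet> h)) (at x)"
    and gradi_integrable: "\<And>x. integrable (measure_pmf D) (\<lambda>i. gradi i x)"
    and grad_expect: "\<And>x. measure_pmf.expectation D (\<lambda>i. gradi i x) = gradf x"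
    and g_proper: "proper_fun g"
    and g_convex: "ext_convex g"
    and g_lsc: "lsc g"
    and tau_pos: "\<tau> > 0"
    and eps_pos: "\<epsilon> > 0"
  shows "ereal ((norm (prox \<tau> g (xt - \<tau> *\<^sub>R gradi it xt) - z))\<^sup>2 - (norm (xt - z))\<^sup>2)
    \<le> ereal (2 * \<tau> * (fi it z - fi it xt))
       + ereal (2 * \<tau>) * (g z - g (prox \<tau> g (xt - \<tau> *\<^sub>R gradi it xt)))
       + ereal (\<tau> / \<epsilon> * (norm (gradi it xt - gradf xt))\<^sup>2)
       + ereal (2 * \<tau> * (f xt - f (prox \<tau> g (xt - \<tau> *\<^sub>R gradi it xt))))
       + ereal ((\<tau> * \<epsilon> + \<tau> * L - 1) * (norm (xt - prox \<tau> g (xt - \<tau> *\<^sub>R gradi it xt)))\<^sup>2)"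
proof -
  define p where "p = prox \<tau> g (xt - \<tau> *\<^sub>R gradi it xt)"
  have g_ninf: "\<And>x. g x \<noteq> -\<infinity>"
    using g_proper by (simp add: proper_fun_def)
  obtain gp where gp: "g p = ereal gp"
    using prox_value_finite[OF g_proper g_convex g_lsc tau_pos] unfolding p_def by blast
  have gradf_lipschitz: "norm (gradf x - gradf y) \<le> L * norm (x - y)" for x y
    using measure_pmf.expectation_lipschitz[of gradi x y L D] fi_smooth gradi_integrable
    by (simp add: grad_expect)
  show ?thesis
  proof (cases "g z")
    case (real gz)
    have "\<tau> * gp + (xt - \<tau> *\<^sub>R gradi it xt - p) \<bullet> (z - p) \<le> \<tau> * gz"
      using prox_objective_min_variational_inequality[OF g_convex g_ninf tau_pos
          prox_minimizes[OF g_proper g_convex g_lsc tau_pos] gp[unfolded p_def] real]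
      unfolding p_def .
    from proximal_gradient_step_inequality[OF this
        convex_on_imp_above_tangent_inner[OF fi_convex fi_grad]
        lipschitz_gradient_quadratic_upper_bound[OF f_grad gradf_lipschitz] tau_pos eps_pos]
    show ?thesis
      using real gp by (simp add: p_def)
  qed (use gp tau_pos g_ninf in \<open>simp_all add: p_def\<close>)
qed

end
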